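(* Let $m>0$ be a real number and let $\omega=\omega(q)$ be a positive integer-valued function of $q$ such that $\omega(q) \ge \frac{q}{m}\cdot\frac{\log\log q}{\log q}$ for all sufficiently large $q$. Then for all sufficiently large $q$ there exists a $q$-solvable undirected graph which contains no clique of size $\omega(q)$ (i.e. is $K_{\omega(q)}$-free) and has at most $q^{2m+1}$ vertices.
   Context: All graphs are finite. A directed graph $D=(V,E)$ has arcs $E \subseteq \{(u,v)\in V^2 : u \neq v\}$; an undirected graph is identified with the directed graph having both arcs $(u,v)$ and $(v,u)$ for each edge. $N^-(v)=\{u:(u,v)\in E\}$. For $q\ge2$ let $[q]=\{0,\dots,q-1\}$. A $D$-function over $[q]$ is a map $f=(f_v)_{v\in V}:[q]^V\to[q]^V$ with each $f_v(x)$ depending only on $(x_u)_{u\in N^-(v)}$. $D$ is $q$-solvable if some $D$-function $f$ over $[q]$ has the property that for every $x\in[q]^V$ there is $v$ with $f_v(x)=x_v$. Logarithms are natural logarithms. *)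

theory Defs
  imports "HOL-Analysis.Analysis" "HOL-Library.FuncSet"
begin

definition digraph :: "'a set \<Rightarrow> ('a \<Rightarrow> 'a \<Rightarrow> bool) \<Rightarrow> bool" where
  "digraph V E \<longleftrightarrow> finite V \<and> (\<forall>u v. E u v \<longrightarrow> u \<in> V \<and> v \<in> V \<and> u \<noteq> v)"

definition undirected_graph :: "'a set \<Rightarrow> ('a \<Rightarrow> 'a \<Rightarrow> bool) \<Rightarrow> bool" where
  "undirected_graph V E \<longleftrightarrow> digraph V E \<and> (\<forall>u v. E u v \<longrightarrow> E v u)"

definition in_nbhd :: "'a set \<Rightarrow> ('a \<Rightarrow> 'a \<Rightarrow> bool) \<Rightarrow> 'a \<Rightarrow> 'a set" where
  "in_nbhd V E v = {u \<in> V. E u v}"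

definition configs :: "'a set \<Rightarrow> nat \<Rightarrow> ('a \<Rightarrow> nat) set" where
  "configs V q = (V \<rightarrow>\<^sub>E {0..<q})"

text \<open>A D-function over [q]: f x v is the v-th coordinate of f(x); it lies in [q] and
  depends only on the values of x on the in-neighbourhood of v.\<close>
definition D_function :: "'a set \<Rightarrow> ('a \<Rightarrow> 'a \<Rightarrow> bool) \<Rightarrow> nat \<Rightarrow> (('a \<Rightarrow> nat) \<Rightarrow> 'a \<Rightarrow> nat) \<Rightarrow> bool" where
  "D_function V E q f \<longleftrightarrow>
     (\<forall>x \<in> configs V q. \<forall>v \<in> V. f x v < q) \<and>
     (\<forall>x \<in> configs V q. \<forall>y \<in> configs V q. \<forall>v \<in> V.
        (\<forall>u \<in> in_nbhd V E v. x u = y u) \<longrightarrow> f x v = f y v)"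

definition q_solvable :: "'a set \<Rightarrow> ('a \<Rightarrow> 'a \<Rightarrow> bool) \<Rightarrow> nat \<Rightarrow> bool" where
  "q_solvable V E q \<longleftrightarrow>
     (\<exists>f. D_function V E q f \<and> (\<forall>x \<in> configs V q. \<exists>v \<in> V. f x v = x v))"

definition is_clique :: "'a set \<Rightarrow> ('a \<Rightarrow> 'a \<Rightarrow> bool) \<Rightarrow> 'a set \<Rightarrow> bool" where
  "is_clique V E K \<longleftrightarrow> K \<subseteq> V \<and> (\<forall>u \<in> K. \<forall>v \<in> K. u \<noteq> v \<longrightarrow> E u v)"

definition clique_free :: "'a set \<Rightarrow> ('a \<Rightarrow> 'a \<Rightarrow> bool) \<Rightarrow> nat \<Rightarrow> bool" where
  "clique_free V E k \<longleftrightarrow> \<not> (\<exists>K. is_clique V E K \<and> finite K \<and> card K = k)"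

end

theory Submission
  imports Defs "HOL-Library.Nat_Bijection" "HOL-Real_Asymp.Real_Asymp"
begin

text \<open>Let r = \<lfloor>ln q\<rfloor>, a = 2r^2 - 1 and N = a(a + 1) + 1. The complete bipartite graph
  with sides of sizes a and N is r-solvable as soon as there are N maps [r]^a \<rightarrow> [r] such that
  every set of a + 1 words is mapped onto [r] by one of them, and a union bound shows that
  such maps exist. Replacing every vertex by a clique of k = \<lfloor>q / r\<rfloor> + 1 clones turns
  r-solvability into q-solvability: the sum of the values of the clones, taken mod q and divided
  by k, plays the role of the symbol in [r] of the original vertex. Cliques of the blow-up have
  at most 2k < \<omega>(q) vertices, and it has (a + 1)^2 k = 4r^4 k \<le> q^(2m+1) vertices.\<close>

lemma q_solvableI:
  assumes "\<And>x v. x \<in> configs V q \<Longrightarrow> v \<in> V \<Longrightarrow> f x v < q"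
    and "\<And>x y v. x \<in> configs V q \<Longrightarrow> y \<in> configs V q \<Longrightarrow> v \<in> V \<Longrightarrow>
           (\<And>u. u \<in> in_nbhd V E v \<Longrightarrow> x u = y u) \<Longrightarrow> f x v = f y v"
    and "\<And>x. x \<in> configs V q \<Longrightarrow> \<exists>v\<in>V. f x v = x v"
  shows "q_solvable V E q"
  unfolding q_solvable_def D_function_def using assms by blast

lemma q_solvableE:
  assumes "q_solvable V E q"
  obtains f where "\<And>x v. x \<in> configs V q \<Longrightarrow> v \<in> V \<Longrightarrow> f x v < q"
    and "\<And>x y v. x \<in> configs V q \<Longrightarrow> y \<in> configs V q \<Longrightarrow> v \<in> V \<Longrightarrow>
           (\<And>u. u \<in> in_nbhd V E v \<Longrightarrow> x u = y u) \<Longrightarrow> f x v = f y v"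
    and "\<And>x. x \<in> configs V q \<Longrightarrow> \<exists>v\<in>V. f x v = x v"
proof -
  obtain f where "D_function V E q f" "\<forall>x\<in>configs V q. \<exists>v\<in>V. f x v = x v"
    using assms unfolding q_solvable_def by blast
  then show thesis
    unfolding D_function_def by (intro that) blast+
qed

definition relabel :: "('a \<Rightarrow> 'b) \<Rightarrow> 'a set \<Rightarrow> ('a \<Rightarrow> 'a \<Rightarrow> bool) \<Rightarrow> 'b \<Rightarrow> 'b \<Rightarrow> bool" where
  "relabel h V E u v \<longleftrightarrow> (\<exists>a\<in>V. \<exists>b\<in>V. u = h a \<and> v = h b \<and> E a b)"

lemma relabel_image_iff:
  assumes "inj_on h V" "a \<in> V" "b \<in> V"
  shows "relabel h V E (h a) (h b) \<longleftrightarrow> E a b"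
  using assms unfolding relabel_def inj_on_def by blast

lemma undirected_graph_relabel:
  assumes "inj_on h V" "undirected_graph V E"
  shows "undirected_graph (h ` V) (relabel h V E)"
  using assms unfolding undirected_graph_def digraph_def relabel_def inj_on_def by blast

lemma clique_free_relabel:
  assumes "inj_on h V" "clique_free V E w"
  shows "clique_free (h ` V) (relabel h V E) w"
  unfolding clique_free_def
proof
  assume "\<exists>K'. is_clique (h ` V) (relabel h V E) K' \<and> finite K' \<and> card K' = w"
  then obtain K' where K': "is_clique (h ` V) (relabel h V E) K'" "finite K'" "card K' = w"
    by blast
  define K where "K = V \<inter> h -` K'"
  have image: "h ` K = K'" and inj: "inj_on h K"
    using K' assms(1) unfolding K_def is_clique_def by (auto intro: inj_on_subset)
  have "is_clique V E K"
    unfolding is_clique_def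
  proof (intro conjI ballI impI)
    fix a b assume "a \<in> K" "b \<in> K" "a \<noteq> b"
    then have "relabel h V E (h a) (h b)"
      using K'(1) inj_onD[OF assms(1)] unfolding is_clique_def K_def by blast
    then show "E a b"
      using \<open>a \<in> K\<close> \<open>b \<in> K\<close> relabel_image_iff[OF assms(1)] unfolding K_def by blast
  qed (auto simp: K_def)
  moreover have "finite K" "card K = w"
    using K' image inj by (auto simp: finite_image_iff card_image)
  ultimately show False
    using assms(2) unfolding clique_free_def by blast
qed

lemma q_solvable_relabel:
  assumes inj: "inj_on h V" and "q_solvable V E q"
  shows "q_solvable (h ` V) (relabel h V E) q"
proof -
  obtain f where f_range: "\<And>x v. x \<in> configs V q \<Longrightarrow> v \<in> V \<Longrightarrow> f x v < q"
    and f_local: "\<And>x y v. x \<in> configs V q \<Longrightarrow> y \<in> configs V q \<Longrightarrow> v \<in> V \<Longrightarrow>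
           (\<And>u. u \<in> in_nbhd V E v \<Longrightarrow> x u = y u) \<Longrightarrow> f x v = f y v"
    and f_fixed: "\<And>x. x \<in> configs V q \<Longrightarrow> \<exists>v\<in>V. f x v = x v"
    using assms(2) by (elim q_solvableE) blast
  define pull where "pull x = restrict (\<lambda>a. x (h a)) V" for x :: "'b \<Rightarrow> nat"
  have pull_configs: "pull x \<in> configs V q" if "x \<in> configs (h ` V) q" for x
    using that unfolding configs_def pull_def by (auto simp: PiE_iff)
  show ?thesis
  proof (rule q_solvableI[where f = "\<lambda>x v'. f (pull x) (inv_into V h v')"])
    fix x v' assume "x \<in> configs (h ` V) q" "v' \<in> h ` V"
    then show "f (pull x) (inv_into V h v') < q"
      using f_range pull_configs inj by auto
  next
    fix x y v' assume x: "x \<in> configs (h ` V) q" and y: "y \<in> configs (h ` V) q"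
      and "v' \<in> h ` V" and agree: "\<And>u. u \<in> in_nbhd (h ` V) (relabel h V E) v' \<Longrightarrow> x u = y u"
    then obtain v where v: "v \<in> V" "v' = h v" by blast
    have "pull x u = pull y u" if "u \<in> in_nbhd V E v" for u
      using that agree[of "h u"] relabel_image_iff[OF inj] v
      unfolding in_nbhd_def pull_def by auto
    then show "f (pull x) (inv_into V h v') = f (pull y) (inv_into V h v')"
      using f_local[OF pull_configs[OF x] pull_configs[OF y] v(1)] v inj by simp
  next
    fix x assume x: "x \<in> configs (h ` V) q"
    then obtain v where "v \<in> V" "f (pull x) v = pull x v"
      using f_fixed pull_configs by blast
    then show "\<exists>v'\<in>h ` V. f (pull x) (inv_into V h v') = x v'"
      using inj by (intro bexI[of _ "h v"]) (auto simp: pull_def)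
  qed
qed

definition blow_up :: "'a set \<Rightarrow> ('a \<Rightarrow> 'a \<Rightarrow> bool) \<Rightarrow> nat \<Rightarrow> 'a \<times> nat \<Rightarrow> 'a \<times> nat \<Rightarrow> bool" where
  "blow_up V E k p p' \<longleftrightarrow> fst p \<in> V \<and> fst p' \<in> V \<and> snd p < k \<and> snd p' < k \<and>
     ((fst p = fst p' \<and> snd p \<noteq> snd p') \<or> E (fst p) (fst p'))"

lemma undirected_graph_blow_up:
  assumes "undirected_graph V E"
  shows "undirected_graph (V \<times> {0..<k}) (blow_up V E k)"
  using assms unfolding undirected_graph_def digraph_def blow_up_def
  by (auto simp: prod_eq_iff)

lemma blow_up_clique:
  assumes "is_clique (V \<times> {0..<k}) (blow_up V E k) K" "finite K"
  shows "is_clique V E (fst ` K)" "card K \<le> k * card (fst ` K)"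
proof -
  show "is_clique V E (fst ` K)"
    using assms(1) unfolding is_clique_def blow_up_def by (fastforce simp: prod_eq_iff)
  have "K \<subseteq> fst ` K \<times> {0..<k}"
    using assms(1) unfolding is_clique_def by force
  then have "card K \<le> card (fst ` K \<times> {0..<k})"
    using assms(2) by (intro card_mono) auto
  then show "card K \<le> k * card (fst ` K)"
    by (simp add: card_cartesian_product mult.commute)
qed

lemma clique_free_blow_up:
  assumes "\<And>K. is_clique V E K \<Longrightarrow> finite K \<Longrightarrow> card K \<le> c" "k * c < w"
  shows "clique_free (V \<times> {0..<k}) (blow_up V E k) w"
proof -
  have "card K < w" if "is_clique (V \<times> {0..<k}) (blow_up V E k) K" "finite K" for K
  proof -
    have "card K \<le> k * card (fst ` K)"
      using blow_up_clique[OF that] by blast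
    also have "\<dots> \<le> k * c"
      using assms(1) blow_up_clique[OF that] that(2) by simp
    finally show ?thesis
      using assms(2) by linarith
  qed
  then show ?thesis
    unfolding clique_free_def by blast
qed

lemma nat_add_mod_diff_mod_cancel:
  fixes x t q :: nat
  assumes "x < q"
  shows "nat ((int ((x + t) mod q) - int t) mod int q) = x"
  using assms by (simp add: zmod_int mod_diff_left_eq)

text \<open>Each clone (v, i) guesses that the sum of the k values at v, taken mod q, equals
  k times the guess of the r-solving function at v (applied to these sums divided by k)
  plus i; when that guess at v is right, the clone i = (sum mod q) mod k guesses right.\<close>
lemma q_solvable_blow_up:
  assumes "q_solvable V E r" "0 < q" "q \<le> k * r"
  shows "q_solvable (V \<times> {0..<k}) (blow_up V E k) q"
proof -
  obtain g where g_local: "\<And>x y v. x \<in> configs V r \<Longrightarrow> y \<in> configs V r \<Longrightarrow> v \<in> V \<Longrightarrow>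
           (\<And>u. u \<in> in_nbhd V E v \<Longrightarrow> x u = y u) \<Longrightarrow> g x v = g y v"
    and g_fixed: "\<And>y. y \<in> configs V r \<Longrightarrow> \<exists>v\<in>V. g y v = y v"
    using assms(1) by (elim q_solvableE) blast
  define sum_mod where "sum_mod x v = (\<Sum>i<k. x (v, i)) mod q" for x :: "'a \<times> nat \<Rightarrow> nat" and v
  define Y where "Y x = restrict (\<lambda>v. sum_mod x v div k) V" for x :: "'a \<times> nat \<Rightarrow> nat"
  define others where "others x v i = (\<Sum>j\<in>{..<k} - {i}. x (v, j))"
    for x :: "'a \<times> nat \<Rightarrow> nat" and v i
  define f where "f x p = nat ((int (g (Y x) (fst p) * k + snd p)
                               - int (others x (fst p) (snd p))) mod int q)"
    for x :: "'a \<times> nat \<Rightarrow> nat" and p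
  have Y_configs: "Y x \<in> configs V r" for x
  proof -
    have "sum_mod x v < k * r" for v
      using assms(2,3) unfolding sum_mod_def by (meson mod_less_divisor order_less_le_trans)
    then show ?thesis
      unfolding configs_def Y_def by (auto simp: less_mult_imp_div_less mult.commute)
  qed
  show ?thesis
  proof (rule q_solvableI[where f = f])
    show "f x p < q" for x :: "'a \<times> nat \<Rightarrow> nat" and p
      unfolding f_def using assms(2) by (simp add: nat_less_iff)
  next
    fix x y :: "'a \<times> nat \<Rightarrow> nat" and p assume "p \<in> V \<times> {0..<k}"
      and agree: "\<And>u. u \<in> in_nbhd (V \<times> {0..<k}) (blow_up V E k) p \<Longrightarrow> x u = y u"
    then obtain v i where p: "p = (v, i)" "v \<in> V" "i < k" by auto
    have "Y x u = Y y u" if "u \<in> in_nbhd V E v" for u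
      using that agree p unfolding in_nbhd_def blow_up_def Y_def sum_mod_def by simp
    then have "g (Y x) v = g (Y y) v"
      using g_local[OF Y_configs Y_configs p(2)] by blast
    moreover have "others x v i = others y v i"
      using agree p unfolding others_def in_nbhd_def blow_up_def by (intro sum.cong) auto
    ultimately show "f x p = f y p"
      unfolding f_def p by simp
  next
    fix x assume x: "x \<in> configs (V \<times> {0..<k}) q"
    obtain v where v: "v \<in> V" "g (Y x) v = Y x v"
      using g_fixed[OF Y_configs] by blast
    define i where "i = sum_mod x v mod k"
    have "0 < k"
      using assms(2,3) by (cases k) auto
    then have i: "i < k"
      unfolding i_def by simp
    have "g (Y x) v * k + i = sum_mod x v"
      using v unfolding i_def Y_def by simp
    also have "\<dots> = (x (v, i) + others x v i) mod q"
      unfolding sum_mod_def others_def using i by (simp add: sum.remove)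
    finally have "g (Y x) v * k + i = (x (v, i) + others x v i) mod q" .
    moreover have "x (v, i) < q"
      using x v(1) i unfolding configs_def by auto
    ultimately have "f x (v, i) = x (v, i)"
      unfolding f_def by (simp add: nat_add_mod_diff_mod_cancel)
    then show "\<exists>p\<in>V \<times> {0..<k}. f x p = x p"
      using v(1) i by force
  qed
qed

lemma diagonal_word_exists:
  assumes "finite S" "card S \<le> a" "\<And>x i. x \<in> S \<Longrightarrow> i < a \<Longrightarrow> x i \<in> A" "A \<noteq> {}"
  shows "\<exists>c. (\<forall>i<a. c i \<in> A) \<and> (\<forall>x\<in>S. \<exists>i<a. x i = c i)"
proof -
  obtain e where e: "inj_on e S" "e ` S \<subseteq> {0..<a}"
    using card_le_inj[OF assms(1), of "{0..<a}"] assms(2) by auto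
  define c where "c i = (if i \<in> e ` S then inv_into S e i i else SOME z. z \<in> A)" for i
  have "c i \<in> A" if "i < a" for i
  proof (cases "i \<in> e ` S")
    case True
    then show ?thesis
      using that assms(3) inv_into_into[of i e S] unfolding c_def by simp
  next
    case False
    then show ?thesis
      using assms(4) some_in_eq[of A] unfolding c_def by simp
  qed
  moreover have "x (e x) = c (e x)" "e x < a" if "x \<in> S" for x
    using that e unfolding c_def by auto
  ultimately show ?thesis
    by blast
qed

definition complete_bipartite :: "nat \<Rightarrow> nat \<Rightarrow> nat \<Rightarrow> nat \<Rightarrow> bool" where
  "complete_bipartite a n u v \<longleftrightarrow> u < n \<and> v < n \<and> (u < a) \<noteq> (v < a)"

lemma undirected_graph_complete_bipartite: "undirected_graph {0..<n} (complete_bipartite a n)"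
  unfolding undirected_graph_def digraph_def complete_bipartite_def by auto

lemma complete_bipartite_clique_card:
  assumes "is_clique {0..<n} (complete_bipartite a n) K" "finite K"
  shows "card K \<le> 2"
proof -
  have side: "card {u \<in> K. P u} \<le> 1" if same_side: "\<And>u v. P u \<Longrightarrow> P v \<Longrightarrow> (u < a) = (v < a)" for P
  proof -
    have "u = v" if "u \<in> K" "P u" "v \<in> K" "P v" for u v
      using assms(1) same_side[OF that(2,4)] that
      unfolding is_clique_def complete_bipartite_def by blast
    then show ?thesis
      using assms(2) card_le_Suc0_iff_eq[of "{u \<in> K. P u}"] by auto
  qed
  have "K = {u \<in> K. u < a} \<union> {u \<in> K. \<not> u < a}"
    by blast
  then have "card K \<le> card {u \<in> K. u < a} + card {u \<in> K. \<not> u < a}"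
    by (metis card_Un_le)
  also have "\<dots> \<le> 2"
    using side[of "\<lambda>u. u < a"] side[of "\<lambda>u. \<not> u < a"] by auto
  finally show ?thesis .
qed

definition onto_family :: "nat \<Rightarrow> nat \<Rightarrow> nat \<Rightarrow> (nat \<Rightarrow> (nat \<Rightarrow> nat) \<Rightarrow> nat) \<Rightarrow> bool" where
  "onto_family a r N d \<longleftrightarrow>
     (\<forall>j<N. d j \<in> ({0..<a} \<rightarrow>\<^sub>E {0..<r}) \<rightarrow> {0..<r}) \<and>
     (\<forall>S. S \<subseteq> {0..<a} \<rightarrow>\<^sub>E {0..<r} \<longrightarrow> card S = a + 1 \<longrightarrow> (\<exists>j<N. d j ` S = {0..<r}))"

lemma card_unguessed_words_le:
  assumes "onto_family a r N d" "\<And>j. j < N \<Longrightarrow> y j < r"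
  shows "card {x \<in> {0..<a} \<rightarrow>\<^sub>E {0..<r}. \<forall>j<N. d j x \<noteq> y j} \<le> a"
proof (rule ccontr)
  assume "\<not> ?thesis"
  then have "a + 1 \<le> card {x \<in> {0..<a} \<rightarrow>\<^sub>E {0..<r}. \<forall>j<N. d j x \<noteq> y j}"
    by simp
  then obtain S where S: "S \<subseteq> {x \<in> {0..<a} \<rightarrow>\<^sub>E {0..<r}. \<forall>j<N. d j x \<noteq> y j}" "card S = a + 1"
    by (rule obtain_subset_with_card_n)
  then obtain j where "j < N" "d j ` S = {0..<r}"
    using assms(1) unfolding onto_family_def by blast
  then obtain x where "x \<in> S" "d j x = y j"
    using assms(2) by (metis atLeastLessThan_iff imageE zero_le)
  then show False
    using S(1) \<open>j < N\<close> by auto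
qed

text \<open>Right vertex a + j guesses d_j of the word on the left side. The left vertices guess a
  word agreeing somewhere with each left word for which all right guesses fail; there
  are at most a such words.\<close>
lemma q_solvable_complete_bipartite:
  assumes "onto_family a r N d" "0 < r"
  shows "q_solvable {0..<a + N} (complete_bipartite a (a + N)) r"
proof -
  define unguessed where
    "unguessed y = {x \<in> {0..<a} \<rightarrow>\<^sub>E {0..<r}. \<forall>j<N. d j x \<noteq> y (a + j)}" for y
  define c where
    "c y = (SOME c. (\<forall>i<a. c i \<in> {0..<r}) \<and> (\<forall>x\<in>unguessed y. \<exists>i<a. x i = c i))" for y
  have c: "(\<forall>i<a. c y i \<in> {0..<r}) \<and> (\<forall>x\<in>unguessed y. \<exists>i<a. x i = c y i)"
    if "y \<in> configs {0..<a + N} r" for y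
  proof -
    have "card (unguessed y) \<le> a"
      unfolding unguessed_def
      by (rule card_unguessed_words_le[OF assms(1)]) (use that in \<open>auto simp: configs_def\<close>)
    then have "\<exists>c. (\<forall>i<a. c i \<in> {0..<r}) \<and> (\<forall>x\<in>unguessed y. \<exists>i<a. x i = c i)"
      using assms(2) by (intro diagonal_word_exists) (auto simp: unguessed_def finite_PiE)
    then show ?thesis
      unfolding c_def by (rule someI_ex)
  qed
  define left where "left y = restrict y {0..<a}" for y :: "nat \<Rightarrow> nat"
  have left: "left y \<in> {0..<a} \<rightarrow>\<^sub>E {0..<r}" if "y \<in> configs {0..<a + N} r" for y
    unfolding left_def restrict_PiE_iff
    using PiE_mem[OF that[unfolded configs_def]] by simp
  show ?thesis
  proof (rule q_solvableI[where f = "\<lambda>y u. if u < a then c y u else d (u - a) (left y)"])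
    fix y u assume y: "y \<in> configs {0..<a + N} r" and u: "u \<in> {0..<a + N}"
    show "(if u < a then c y u else d (u - a) (left y)) < r"
    proof (cases "u < a")
      case True
      then show ?thesis
        using c[OF y] by simp
    next
      case False
      then have "d (u - a) \<in> ({0..<a} \<rightarrow>\<^sub>E {0..<r}) \<rightarrow> {0..<r}"
        using u assms(1) unfolding onto_family_def by simp
      then show ?thesis
        using False left[OF y] by auto
    qed
  next
    fix x y :: "nat \<Rightarrow> nat" and u assume u: "u \<in> {0..<a + N}"
      and agree: "\<And>w. w \<in> in_nbhd {0..<a + N} (complete_bipartite a (a + N)) u \<Longrightarrow> x w = y w"
    have "x w = y w" if "w < a + N" "(w < a) \<noteq> (u < a)" for w
      using agree u that unfolding in_nbhd_def complete_bipartite_def by simp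
    then have "u < a \<Longrightarrow> unguessed x = unguessed y" "\<not> u < a \<Longrightarrow> left x = left y"
      unfolding unguessed_def left_def by (auto intro: restrict_ext)
    then show "(if u < a then c x u else d (u - a) (left x)) =
               (if u < a then c y u else d (u - a) (left y))"
      unfolding c_def by simp
  next
    fix y assume y: "y \<in> configs {0..<a + N} r"
    show "\<exists>u\<in>{0..<a + N}. (if u < a then c y u else d (u - a) (left y)) = y u"
    proof (cases "left y \<in> unguessed y")
      case True
      then obtain i where "i < a" "left y i = c y i"
        using c[OF y] by blast
      then show ?thesis
        unfolding left_def by (intro bexI[of _ i]) auto
    next
      case False
      then obtain j where "j < N" "d j (left y) = y (a + j)"
        using left[OF y] unfolding unguessed_def by auto
      then show ?thesis
        by (intro bexI[of _ "a + j"]) auto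
    qed
  qed
qed

lemma card_PiE_not_onto_le:
  assumes "finite X" "S \<subseteq> X" "finite C"
  shows "card {f \<in> X \<rightarrow>\<^sub>E C. f ` S \<noteq> C} \<le> card C * ((card C - 1) ^ card S * card C ^ (card X - card S))"
proof -
  define P where "P c = (\<Pi>\<^sub>E x\<in>X. if x \<in> S then C - {c} else C)" for c
  have "{f \<in> X \<rightarrow>\<^sub>E C. f ` S \<noteq> C} \<subseteq> (\<Union>c\<in>C. P c)"
  proof
    fix f assume f: "f \<in> {f \<in> X \<rightarrow>\<^sub>E C. f ` S \<noteq> C}"
    then have "f ` S \<subset> C"
      using assms(2) by auto
    then obtain c where c: "c \<in> C" "c \<notin> f ` S"
      by blast
    have "f \<in> X \<rightarrow>\<^sub>E C"
      using f by simp
    then have "f \<in> P c"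
      using c unfolding P_def by (auto simp: PiE_iff)
    then show "f \<in> (\<Union>c\<in>C. P c)"
      using c(1) by blast
  qed
  then have "card {f \<in> X \<rightarrow>\<^sub>E C. f ` S \<noteq> C} \<le> card (\<Union>c\<in>C. P c)"
    using assms by (intro card_mono) (auto simp: P_def finite_PiE)
  also have "\<dots> \<le> (\<Sum>c\<in>C. card (P c))"
    using assms(3) by (rule card_UN_le)
  also have "\<dots> = (\<Sum>c\<in>C. (card C - 1) ^ card S * card C ^ (card X - card S))"
  proof (rule sum.cong[OF refl])
    fix c assume "c \<in> C"
    then have card_remove: "card (C - {c}) = card C - 1"
      by simp
    have "card (P c) = (\<Prod>x\<in>X. card (if x \<in> S then C - {c} else C))"
      unfolding P_def using assms(1) by (rule card_PiE)
    also have "\<dots> = (\<Prod>x\<in>X. if x \<in> S then card C - 1 else card C)"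
      using card_remove by (intro prod.cong) auto
    also have "\<dots> = (card C - 1) ^ card (X \<inter> S) * card C ^ card (X - S)"
      using assms(1) by (simp add: prod.If_cases Diff_eq)
    finally show "card (P c) = (card C - 1) ^ card S * card C ^ (card X - card S)"
      using assms(1,2) by (simp add: card_Diff_subset finite_subset Int_absorb1)
  qed
  also have "\<dots> = card C * ((card C - 1) ^ card S * card C ^ (card X - card S))"
    by simp
  finally show ?thesis .
qed

lemma exists_PiE_avoiding:
  assumes "finite I" "finite F" "finite \<S>"
    and "\<And>S. S \<in> \<S> \<Longrightarrow> B S \<subseteq> F" "\<And>S. S \<in> \<S> \<Longrightarrow> card (B S) \<le> b"
    and "card \<S> * b ^ card I < card F ^ card I"
  shows "\<exists>d \<in> I \<rightarrow>\<^sub>E F. \<forall>S\<in>\<S>. \<exists>i\<in>I. d i \<notin> B S"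
proof (rule ccontr)
  assume no_avoiding: "\<not> ?thesis"
  have "finite (B S)" if "S \<in> \<S>" for S
    using assms(2,4) that finite_subset by blast
  then have "I \<rightarrow>\<^sub>E F \<subseteq> (\<Union>S\<in>\<S>. I \<rightarrow>\<^sub>E B S)"
    using no_avoiding by (auto simp: PiE_iff)
  then have "card F ^ card I \<le> card (\<Union>S\<in>\<S>. I \<rightarrow>\<^sub>E B S)"
    using assms(1,3) \<open>\<And>S. S \<in> \<S> \<Longrightarrow> finite (B S)\<close> unfolding card_funcsetE[OF assms(1), symmetric]
    by (intro card_mono) (auto intro!: finite_PiE)
  also have "\<dots> \<le> (\<Sum>S\<in>\<S>. card (I \<rightarrow>\<^sub>E B S))"
    using assms(3) by (rule card_UN_le)
  also have "\<dots> \<le> (\<Sum>S\<in>\<S>. b ^ card I)"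
    using assms(1,5) by (intro sum_mono) (simp add: card_funcsetE power_mono)
  also have "\<dots> = card \<S> * b ^ card I"
    by simp
  finally show False
    using assms(6) by linarith
qed

lemma power_Suc_ge_binomial_two_terms: "x ^ (n + 1) + (n + 1) * x ^ n \<le> (x + 1 :: nat) ^ (n + 1)"
proof (induction n)
  case 0
  then show ?case by simp
next
  case (Suc n)
  have "x ^ (Suc n + 1) + (Suc n + 1) * x ^ Suc n \<le> (x + 1) * (x ^ (n + 1) + (n + 1) * x ^ n)"
    by (simp add: algebra_simps)
  also have "\<dots> \<le> (x + 1) * (x + 1) ^ (n + 1)"
    using Suc.IH by (rule mult_le_mono2)
  finally show ?case
    by simp
qed

lemma two_mult_pred_power_le:
  assumes "1 \<le> r"
  shows "2 * (r - 1) ^ r \<le> (r :: nat) ^ r"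
proof -
  obtain n where r: "r = n + 1"
    using assms by (metis add.commute le_Suc_ex)
  have "n ^ (n + 1) \<le> (n + 1) * n ^ n"
    by simp
  then show ?thesis
    using power_Suc_ge_binomial_two_terms[of n n] r by simp
qed

text \<open>With a + 1 = 2r^2 words per set, the factor (1 - 1/r)^(a+1) \<le> 4^-r outweighs the
  r^(a(a+1)) choices of the set and the factor r from the choice of the missing value.\<close>
lemma onto_family_count_less:
  fixes r a N :: nat
  assumes r: "2 \<le> r" and a: "a + 1 = 2 * r ^ 2" and N: "N = a * (a + 1) + 1"
  shows "r ^ (a * (a + 1)) * (r * (r - 1) ^ (a + 1)) ^ N < (r ^ (a + 1)) ^ N"
proof -
  have a_r: "a + 1 = r * (2 * r)"
    using a by (simp add: power2_eq_square)
  have "4 ^ r * (r - 1) ^ (a + 1) = (2 * (r - 1) ^ r) ^ (2 * r)"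
    unfolding a_r power_mult power_mult_distrib by (simp add: power_mult[symmetric] mult.commute)
  also have "\<dots> \<le> (r ^ r) ^ (2 * r)"
    using r two_mult_pred_power_le by (intro power_mono) auto
  also have "\<dots> = r ^ (a + 1)"
    unfolding a_r power_mult ..
  finally have decay: "4 ^ r * (r - 1) ^ (a + 1) \<le> r ^ (a + 1)" .
  have "r ^ (a * (a + 1) + N) < (2 ^ r) ^ (a * (a + 1) + N)"
    using r N by (intro power_strict_mono) (auto simp: less_exp)
  also have "\<dots> \<le> (2 ^ r) ^ (2 * N)"
    using N by (intro power_increasing) auto
  also have "\<dots> = (2 ^ 2) ^ (r * N)"
    by (simp only: power_mult[symmetric] ac_simps)
  also have "\<dots> = 4 ^ (r * N)"
    by simp
  finally have few_choices: "r ^ (a * (a + 1) + N) < 4 ^ (r * N)" .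
  have "(r * (r - 1) ^ (a + 1)) ^ N * 4 ^ (r * N) = r ^ N * (4 ^ r * (r - 1) ^ (a + 1)) ^ N"
    by (simp add: power_mult power_mult_distrib)
  then have "r ^ (a * (a + 1)) * (r * (r - 1) ^ (a + 1)) ^ N * 4 ^ (r * N)
        = r ^ (a * (a + 1) + N) * (4 ^ r * (r - 1) ^ (a + 1)) ^ N"
    by (simp only: power_add mult.assoc)
  also have "\<dots> \<le> r ^ (a * (a + 1) + N) * (r ^ (a + 1)) ^ N"
    using decay by (intro mult_le_mono2 power_mono) auto
  also have "\<dots> < 4 ^ (r * N) * (r ^ (a + 1)) ^ N"
    using few_choices r by (intro mult_strict_right_mono) auto
  finally show ?thesis
    by simp
qed

lemma card_subsets_le_power:
  assumes "finite W"
  shows "card {S. S \<subseteq> W \<and> card S = n} \<le> card W ^ n"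
proof (cases "n \<le> card W")
  case True
  then show ?thesis
    using n_subsets[OF assms] binomial_le_pow by simp
next
  case False
  then show ?thesis
    using n_subsets[OF assms] by (simp add: binomial_eq_0)
qed

lemma onto_family_exists:
  assumes r: "2 \<le> r" and a: "a + 1 = 2 * r ^ 2" and N: "N = a * (a + 1) + 1"
  shows "\<exists>d. onto_family a r N d"
proof -
  define W where "W = {0..<a} \<rightarrow>\<^sub>E {0..<r}"
  define M where "M = card W"
  define F where "F = W \<rightarrow>\<^sub>E {0..<r}"
  define \<S> where "\<S> = {S. S \<subseteq> W \<and> card S = a + 1}"
  define B where "B S = {f \<in> F. f ` S \<noteq> {0..<r}}" for S
  define b where "b = r * ((r - 1) ^ (a + 1) * r ^ (M - (a + 1)))"
  have W: "finite W" "M = r ^ a"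
    unfolding W_def M_def by (simp_all add: finite_PiE card_PiE)
  have F: "finite F" "card F = r ^ M"
    unfolding F_def M_def using W(1) by (simp_all add: finite_PiE card_funcsetE)
  have "a < 2 ^ a"
    by (rule less_exp)
  also have "(2 :: nat) ^ a \<le> r ^ a"
    using r by (intro power_mono) auto
  finally have a_M: "a + 1 \<le> M"
    using W(2) by simp
  have card_\<S>: "card \<S> \<le> r ^ (a * (a + 1))"
    using card_subsets_le_power[OF W(1), of "a + 1"]
    unfolding \<S>_def M_def[symmetric] W(2) power_mult .
  have "card \<S> * b ^ N \<le> r ^ (a * (a + 1)) * (r * (r - 1) ^ (a + 1)) ^ N * (r ^ (M - (a + 1))) ^ N"
    using card_\<S> unfolding b_def by (simp add: power_mult_distrib mult_ac)
  also have "\<dots> < (r ^ (a + 1)) ^ N * (r ^ (M - (a + 1))) ^ N"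
    using onto_family_count_less[OF r a N] r by (intro mult_strict_right_mono) auto
  also have "\<dots> = card F ^ N"
    using a_M by (simp only: F(2) power_mult_distrib[symmetric] power_add[symmetric]
        le_add_diff_inverse)
  finally have "card \<S> * b ^ card {0..<N} < card F ^ card {0..<N}"
    by simp
  moreover have "card (B S) \<le> b" if "S \<in> \<S>" for S
    using that card_PiE_not_onto_le[OF W(1), of S "{0..<r}"]
    unfolding \<S>_def B_def F_def b_def M_def by simp
  ultimately obtain d where d: "d \<in> {0..<N} \<rightarrow>\<^sub>E F" "\<forall>S\<in>\<S>. \<exists>j\<in>{0..<N}. d j \<notin> B S"
    using exists_PiE_avoiding[of "{0..<N}" F \<S> B b] F(1) W(1)
    unfolding \<S>_def B_def by auto
  have "onto_family a r N d"
    unfolding onto_family_def W_def[symmetric]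
  proof (intro conjI allI impI)
    fix j assume "j < N"
    then show "d j \<in> W \<rightarrow> {0..<r}"
      using d(1) unfolding F_def by (auto simp: PiE_iff)
  next
    fix S assume "S \<subseteq> W" "card S = a + 1"
    then obtain j where "j < N" "d j \<notin> B S"
      using d(2) unfolding \<S>_def by auto
    moreover have "d j \<in> F"
      using d(1) \<open>j < N\<close> by auto
    ultimately show "\<exists>j<N. d j ` S = {0..<r}"
      unfolding B_def by auto
  qed
  then show ?thesis
    by blast
qed

lemma solvable_clique_free_graph_exists:
  assumes r: "2 \<le> r" and q: "0 < q" "q \<le> k * r" and w: "2 * k < w"
  shows "\<exists>(V :: nat set) E. undirected_graph V E \<and> q_solvable V E q \<and> clique_free V E w \<and>
           card V = 4 * r ^ 4 * k"
proof -
  define a where "a = 2 * r ^ 2 - 1"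
  define N where "N = a * (a + 1) + 1"
  have a: "a + 1 = 2 * r ^ 2"
    using r unfolding a_def by (simp add: power2_eq_square)
  obtain d where d: "onto_family a r N d"
    using onto_family_exists[OF r a N_def] by blast
  define V where "V = {0..<a + N} \<times> {0..<k}"
  define E where "E = blow_up {0..<a + N} (complete_bipartite a (a + N)) k"
  have "undirected_graph V E"
    unfolding V_def E_def by (intro undirected_graph_blow_up undirected_graph_complete_bipartite)
  moreover have "q_solvable V E q"
    unfolding V_def E_def using q_solvable_complete_bipartite[OF d] r q
    by (intro q_solvable_blow_up) auto
  moreover have "clique_free V E w"
    unfolding V_def E_def using complete_bipartite_clique_card w
    by (intro clique_free_blow_up) auto
  moreover have "card V = 4 * r ^ 4 * k"
  proof -
    have "a + N = (a + 1) ^ 2"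
      unfolding N_def by (simp add: power2_eq_square)
    then show ?thesis
      unfolding V_def a by (simp add: card_cartesian_product power_mult_distrib flip: power_mult)
  qed
  ultimately show ?thesis
    using inj_prod_encode[of V]
    by (intro exI[of _ "prod_encode ` V"] exI[of _ "relabel prod_encode V E"])
      (simp add: undirected_graph_relabel q_solvable_relabel clique_free_relabel card_image)
qed

lemma floor_ln_graph_parameters:
  fixes q :: nat and m :: real
  defines "L \<equiv> ln (real q)"
  assumes L: "3 \<le> L" "4 * L ^ 4 \<le> real q powr (2 * m)"
    "2 * real q / (L - 1) + 2 < real q / m * (ln L / L)"
  shows "\<exists>r k. 2 \<le> r \<and> 0 < q \<and> q \<le> k * r \<and> 2 * real k < real q / m * (ln L / L) \<and>
           4 * real r ^ 4 * real k \<le> real q powr (2 * m + 1)"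
proof -
  define r where "r = nat \<lfloor>L\<rfloor>"
  define k where "k = q div r + 1"
  have r_L: "real r \<le> L" "L - 1 < real r"
    using L(1) unfolding r_def by linarith+
  then have r: "2 \<le> r"
    using L(1) by linarith
  have q: "2 \<le> q"
  proof (rule ccontr)
    assume "\<not> 2 \<le> q"
    then have "q = 0 \<or> q = 1"
      by auto
    then show False
      using L(1) unfolding L_def by auto
  qed
  have k: "real k \<le> real q / real r + 1"
    unfolding k_def using of_nat_div_le_of_nat[of q r] by simp
  have "q \<le> k * r"
    using dividend_less_times_div[of r q] r unfolding k_def by (simp add: algebra_simps)
  moreover have "2 * real k < real q / m * (ln L / L)"
  proof -
    have "real q / real r \<le> real q / (L - 1)"
      using r_L L(1) by (intro divide_left_mono) auto
    moreover have "2 * real q / (L - 1) = 2 * (real q / (L - 1))"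
      by simp
    ultimately show ?thesis
      using k L(3) by linarith
  qed
  moreover have "4 * real r ^ 4 * real k \<le> real q powr (2 * m + 1)"
  proof -
    have "real q / real r \<le> real q / 2"
      using r by (intro divide_left_mono) auto
    then have "real k \<le> real q"
      using k q by linarith
    then have "4 * real r ^ 4 * real k \<le> 4 * L ^ 4 * real q"
      using r_L(1) by (intro mult_mono power_mono) auto
    also have "\<dots> \<le> real q powr (2 * m) * real q"
      using L(2) by (intro mult_right_mono) auto
    finally show ?thesis
      using q by (simp add: powr_add)
  qed
  ultimately show ?thesis
    using r q by (intro exI[of _ r] exI[of _ k]) auto
qed

lemma eventually_graph_parameters:
  fixes m :: real
  assumes "m > 0"
  shows "\<forall>\<^sub>F q in sequentially. \<exists>r k. 2 \<le> r \<and> 0 < q \<and> q \<le> k * r \<and>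
           2 * real k < real q / m * (ln (ln (real q)) / ln (real q)) \<and>
           4 * real r ^ 4 * real k \<le> real q powr (2 * m + 1)"
proof -
  have "\<forall>\<^sub>F x in at_top. 3 \<le> ln x \<and> 4 * ln x ^ 4 \<le> x powr (2 * m) \<and>
          2 * x / (ln x - 1) + 2 < x / m * (ln (ln x) / ln x)"
    using assms by (intro eventually_conj) real_asymp+
  then have "\<forall>\<^sub>F q in sequentially. 3 \<le> ln (real q) \<and> 4 * ln (real q) ^ 4 \<le> real q powr (2 * m) \<and>
          2 * real q / (ln (real q) - 1) + 2 < real q / m * (ln (ln (real q)) / ln (real q))"
    by (rule eventually_compose_filterlim[OF _ filterlim_real_sequentially])
  then show ?thesis
    by (rule eventually_mono) (intro floor_ln_graph_parameters; simp)
qed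

theorem theorem4:
  fixes m :: real and \<omega> :: "nat \<Rightarrow> nat"
  assumes "m > 0"
    and "\<And>q. \<omega> q > 0"
    and "\<forall>\<^sub>F q in sequentially.
           real (\<omega> q) \<ge> real q / m * (ln (ln (real q)) / ln (real q))"
  shows "\<forall>\<^sub>F q in sequentially. \<exists>(V :: nat set) E.
           undirected_graph V E \<and> q_solvable V E q \<and> clique_free V E (\<omega> q) \<and>
           real (card V) \<le> real q powr (2 * m + 1)"
  using assms(3) eventually_graph_parameters[OF assms(1)]
proof eventually_elim
  case (elim q)
  then obtain r k where "2 \<le> r" "0 < q" "q \<le> k * r" "2 * k < \<omega> q"
      and card_bound: "4 * real r ^ 4 * real k \<le> real q powr (2 * m + 1)"
    by (auto simp flip: of_nat_less_iff)
  then obtain V :: "nat set" and E where "undirected_graph V E" "q_solvable V E q"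
      "clique_free V E (\<omega> q)" and "card V = 4 * r ^ 4 * k"
    using solvable_clique_free_graph_exists by blast
  moreover from \<open>card V = 4 * r ^ 4 * k\<close> have "real (card V) \<le> real q powr (2 * m + 1)"
    using card_bound by simp
  ultimately show ?case
    by blast
qed

end
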